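(* (i) Let $\sigma\in\mathbb R^N$ with $\min_{1\le j\le N}\sigma_j>1/2$. Then for all $u,v\in G^{\sigma,0}$, $$\|uv\|_{G^{\sigma,0}}\lesssim\|u\|_{G^{\sigma,0}}\|v\|_{G^{\sigma,0}}.$$ (ii) Let $\sigma_1=0$, $\min_{2\le j\le N}\sigma_j>1/2$ and $\beta>1/4$. Then for all $\hat u,\hat v:\dot{\mathbb Z}^N\to\mathbb C$, $$\Big\|\sum_{k'\in\dot{\mathbb Z}^N,\,k'\neq k}\langle|\alpha\cdot k||\alpha\cdot(k-k')||\alpha\cdot k'|\rangle^{-\beta}|\hat u(k-k')||\hat v(k')|\Big\|_{\hat G^{\sigma,0}_k}\lesssim\|\hat u\|_{\hat G^{\sigma,0}}\|\hat v\|_{\hat G^{\sigma,0}}.$$ The implicit constants depend only on $\sigma,\beta,\alpha,N$.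
   Context: Standing setting: fix $N\in\mathbb N$ and $\alpha\in\mathbb R^N$ with $\alpha\cdot k\neq0$ for all $k\in\dot{\mathbb Z}^N:=\mathbb Z^N\setminus\{0\}$. Write $\langle x\rangle=(1+|x|^2)^{1/2}$. For $\hat f:\dot{\mathbb Z}^N\to\mathbb C$, $$\|\hat f\|_{\hat G^{\sigma,a}}=\Big(\sum_{k\in\dot{\mathbb Z}^N}|\alpha\cdot k|^{2a}\prod_j\langle k_j\rangle^{2\sigma_j}|\hat f(k)|^2\Big)^{1/2},$$ and $\|f\|_{G^{\sigma,a}}=\|\hat f\|_{\hat G^{\sigma,a}}$ for $f=\sum_k\hat f(k)e^{i(\alpha\cdot k)x}$. The product is defined by $\widehat{uv}(k)=\sum_{k'\in\dot{\mathbb Z}^N,\,k'\neq k}\hat u(k-k')\hat v(k')$ for $k\in\dot{\mathbb Z}^N$; the zero mode is discarded. *)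

theory Defs
  imports "HOL-Analysis.Analysis"
begin

text \<open>Lattice points of Z^N are modelled as functions nat => int vanishing
  at indices >= N; coordinate j (1-based in the paper) is index j-1 here.\<close>

definition Zdot :: "nat \<Rightarrow> (nat \<Rightarrow> int) set" where
  "Zdot N = {k. (\<forall>j\<ge>N. k j = 0) \<and> k \<noteq> (\<lambda>_. 0)}"

definition adot :: "nat \<Rightarrow> (nat \<Rightarrow> real) \<Rightarrow> (nat \<Rightarrow> int) \<Rightarrow> real" where
  "adot N \<alpha> k = (\<Sum>j<N. \<alpha> j * of_int (k j))"

definition jbr :: "real \<Rightarrow> real" where
  "jbr x = sqrt (1 + x\<^sup>2)"

definition Gweight :: "nat \<Rightarrow> (nat \<Rightarrow> real) \<Rightarrow> (nat \<Rightarrow> real) \<Rightarrow> real \<Rightarrow> (nat \<Rightarrow> int) \<Rightarrow> real" where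
  "Gweight N \<alpha> \<sigma> a k = \<bar>adot N \<alpha> k\<bar> powr (2 * a) * (\<Prod>j<N. jbr (of_int (k j)) powr (2 * \<sigma> j))"

definition GsqE :: "nat \<Rightarrow> (nat \<Rightarrow> real) \<Rightarrow> (nat \<Rightarrow> real) \<Rightarrow> real \<Rightarrow> ((nat \<Rightarrow> int) \<Rightarrow> ennreal) \<Rightarrow> ennreal" where
  "GsqE N \<alpha> \<sigma> a g = (\<Sum>\<^sub>\<infinity> k\<in>Zdot N. ennreal (Gweight N \<alpha> \<sigma> a k) * (g k)\<^sup>2)"

definition Gsq :: "nat \<Rightarrow> (nat \<Rightarrow> real) \<Rightarrow> (nat \<Rightarrow> real) \<Rightarrow> real \<Rightarrow> ((nat \<Rightarrow> int) \<Rightarrow> complex) \<Rightarrow> ennreal" where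
  "Gsq N \<alpha> \<sigma> a f = GsqE N \<alpha> \<sigma> a (\<lambda>k. ennreal (cmod (f k)))"

text \<open>Fourier coefficients of the product uv (zero mode discarded).\<close>
definition Gprod :: "nat \<Rightarrow> ((nat \<Rightarrow> int) \<Rightarrow> complex) \<Rightarrow> ((nat \<Rightarrow> int) \<Rightarrow> complex) \<Rightarrow> (nat \<Rightarrow> int) \<Rightarrow> complex" where
  "Gprod N u v k = (\<Sum>\<^sub>\<infinity> k'\<in>Zdot N - {k}. u (k - k') * v k')"

end

theory Submission
  imports Defs
begin

text \<open>
  (i) In every coordinate \<open>\<langle>x + y\<rangle>\<^sup>2\<^sup>s \<le> 4\<^sup>s (\<langle>x\<rangle>\<^sup>-\<^sup>2\<^sup>s + \<langle>y\<rangle>\<^sup>-\<^sup>2\<^sup>s) \<langle>x\<rangle>\<^sup>2\<^sup>s \<langle>y\<rangle>\<^sup>2\<^sup>s\<close>. Inserting this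
  into the weight of \<open>k = (k - k') + k'\<close> and applying Cauchy-Schwarz in \<open>k'\<close> reduces the
  estimate to the uniform bound \<open>\<Sum>\<^sub>k\<^sub>' \<Prod>\<^sub>j (\<langle>k\<^sub>j - k'\<^sub>j\<rangle>\<^sup>-\<^sup>2\<^sup>\<sigma>\<^sup>j + \<langle>k'\<^sub>j\<rangle>\<^sup>-\<^sup>2\<^sup>\<sigma>\<^sup>j) \<le> \<Prod>\<^sub>j 2 \<zeta>(\<sigma>\<^sub>j)\<close>,
  where \<open>\<zeta>(s) = \<Sum>\<^sub>n \<langle>n\<rangle>\<^sup>-\<^sup>2\<^sup>s\<close> is finite for \<open>s > 1/2\<close>.

  (ii) Since \<open>\<sigma>\<^sub>1 = 0\<close>, the sum over the first coordinate \<open>n\<close> of \<open>k' = r + n e\<^sub>1\<close> must be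
  controlled by the resonance factor instead. Both \<open>\<alpha>\<cdot>k'\<close> and \<open>\<alpha>\<cdot>(k - k')\<close> are affine in
  \<open>n\<close> with slope \<open>\<plusminus>\<alpha>\<^sub>1 \<noteq> 0\<close>, so each is \<open>\<ge> |\<alpha>\<^sub>1| |n - n\<^sub>0| / 2\<close> for a suitable \<open>n\<^sub>0\<close>. Hence for
  \<open>|\<alpha>\<cdot>k| \<ge> |\<alpha>\<^sub>1|/2\<close> the sum over \<open>n\<close> of the squared multiplier is dominated by two shifted
  copies of \<open>\<Sum>\<^sub>n \<langle>t n\<^sup>2\<rangle>\<^sup>-\<^sup>2\<^sup>\<beta>\<close>, finite as \<open>4\<beta> > 1\<close>, and the argument of (i) goes through.
  The remaining \<open>k\<close>, with \<open>|\<alpha>\<cdot>k| < |\<alpha>\<^sub>1|/2\<close>, are determined by their other coordinates;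
  for them the multiplier is bounded by 1, Cauchy-Schwarz in \<open>n\<close> replaces \<open>u, v\<close> by their
  \<open>\<ell>\<^sup>2\<close> norms along the first coordinate, and (i) applies on the lattice of the other
  coordinates.
\<close>

section \<open>Unordered sums in \<open>ennreal\<close>\<close>

text \<open>The library fact \<open>summable_on_ennreal\<close> only covers \<open>enat\<close>-valued functions coerced to
  \<open>ennreal\<close>.\<close>

lemma summable_on_ennreal_function [simp]:
  fixes f :: "'a \<Rightarrow> ennreal"
  shows "f summable_on A"
  by (simp add: nonneg_summable_on_complete)

lemma infsum_cmult_right_ennreal:
  fixes f :: "'a \<Rightarrow> ennreal"
  shows "infsum (\<lambda>x. c * f x) A = c * infsum f A"
  by (simp add: nonneg_infsum_complete sum_distrib_left SUP_mult_left_ennreal)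

lemma infsum_cmult_left_ennreal:
  fixes f :: "'a \<Rightarrow> ennreal"
  shows "infsum (\<lambda>x. f x * c) A = infsum f A * c"
  using infsum_cmult_right_ennreal[of c f A] by (simp add: mult.commute)

lemma infsum_mono_ennreal:
  fixes f g :: "'a \<Rightarrow> ennreal"
  assumes "\<And>x. x \<in> A \<Longrightarrow> f x \<le> g x"
  shows "infsum f A \<le> infsum g A"
  using assms by (intro infsum_mono) auto

lemma infsum_mono_neutral_ennreal:
  fixes f g :: "'a \<Rightarrow> ennreal"
  assumes "A \<subseteq> B" "\<And>x. x \<in> A \<Longrightarrow> f x \<le> g x"
  shows "infsum f A \<le> infsum g B"
  using assms by (intro infsum_mono_neutral) auto

lemma infsum_Un_le_ennreal:
  fixes f :: "'a \<Rightarrow> ennreal"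
  shows "infsum f (A \<union> B) \<le> infsum f A + infsum f B"
proof -
  have "infsum f (A \<union> B) = infsum f A + infsum f (B - A)"
    by (subst Un_Diff_cancel[symmetric], rule infsum_Un_disjoint) auto
  also have "\<dots> \<le> infsum f A + infsum f B"
    by (intro add_left_mono infsum_mono_neutral_ennreal) auto
  finally show ?thesis .
qed

lemma infsum_Sigma_finite_ennreal:
  fixes f :: "'a \<times> 'b \<Rightarrow> ennreal"
  assumes "finite A"
  shows "(\<Sum>x\<in>A. infsum (\<lambda>y. f (x, y)) (B x)) = infsum f (Sigma A B)"
  using assms
proof (induction A rule: finite_induct)
  case empty
  then show ?case by simp
next
  case (insert x A)
  have "Sigma (insert x A) B = Pair x ` B x \<union> Sigma A B" by auto
  moreover have "Pair x ` B x \<inter> Sigma A B = {}" using insert by auto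
  ultimately have "infsum f (Sigma (insert x A) B) = infsum f (Pair x ` B x) + infsum f (Sigma A B)"
    by (simp add: infsum_Un_disjoint)
  also have "infsum f (Pair x ` B x) = infsum (\<lambda>y. f (x, y)) (B x)"
    by (subst infsum_reindex) (auto simp: inj_on_def o_def)
  finally show ?case using insert by simp
qed

lemma infsum_Sigma_ennreal:
  fixes f :: "'a \<times> 'b \<Rightarrow> ennreal"
  shows "infsum f (Sigma A B) = infsum (\<lambda>x. infsum (\<lambda>y. f (x, y)) (B x)) A"
proof (rule antisym)
  show "infsum f (Sigma A B) \<le> infsum (\<lambda>x. infsum (\<lambda>y. f (x, y)) (B x)) A"
  proof (subst nonneg_infsum_complete, simp, rule SUP_least, clarify)
    fix F assume F: "finite F" "F \<subseteq> Sigma A B"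
    have "sum f F \<le> infsum f (Sigma (fst ` F) B)"
      using F infsum_mono_neutral_ennreal[of F "Sigma (fst ` F) B" f] by force
    also have "\<dots> = (\<Sum>x\<in>fst ` F. infsum (\<lambda>y. f (x, y)) (B x))"
      using F by (simp add: infsum_Sigma_finite_ennreal)
    also have "\<dots> \<le> infsum (\<lambda>x. infsum (\<lambda>y. f (x, y)) (B x)) A"
      using F infsum_mono_neutral_ennreal[of "fst ` F" A "\<lambda>x. infsum (\<lambda>y. f (x, y)) (B x)"] by force
    finally show "sum f F \<le> infsum (\<lambda>x. infsum (\<lambda>y. f (x, y)) (B x)) A" .
  qed
next
  show "infsum (\<lambda>x. infsum (\<lambda>y. f (x, y)) (B x)) A \<le> infsum f (Sigma A B)"
  proof (subst nonneg_infsum_complete, simp, rule SUP_least, clarify)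
    fix G assume G: "finite G" "G \<subseteq> A"
    have "(\<Sum>x\<in>G. infsum (\<lambda>y. f (x, y)) (B x)) = infsum f (Sigma G B)"
      using G by (simp add: infsum_Sigma_finite_ennreal)
    also have "\<dots> \<le> infsum f (Sigma A B)"
      using G by (intro infsum_mono_neutral_ennreal) auto
    finally show "(\<Sum>x\<in>G. infsum (\<lambda>y. f (x, y)) (B x)) \<le> infsum f (Sigma A B)" .
  qed
qed

lemma infsum_product_ennreal:
  fixes f :: "'a \<Rightarrow> ennreal" and g :: "'b \<Rightarrow> ennreal"
  shows "infsum (\<lambda>(x, y). f x * g y) (A \<times> B) = infsum f A * infsum g B"
  by (simp add: infsum_Sigma_ennreal infsum_cmult_right_ennreal infsum_cmult_left_ennreal)

lemma infsum_ennreal_of_real: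
  fixes g :: "'a \<Rightarrow> real"
  assumes "g summable_on A" "\<And>x. x \<in> A \<Longrightarrow> g x \<ge> 0"
  shows "infsum (\<lambda>x. ennreal (g x)) A = ennreal (infsum g A)"
proof -
  have "\<And>F. finite F \<Longrightarrow> F \<subseteq> A \<Longrightarrow> sum (ennreal \<circ> g) F = ennreal (sum g F)"
    using assms(2) by (metis (mono_tags, lifting) comp_def subsetD sum.cong sum_ennreal)
  then have "infsum (ennreal \<circ> g) A = ennreal (infsum g A)"
    by (simp add: infsum_comm_additive_general assms(1))
  then show ?thesis by (simp add: o_def)
qed

lemma norm_infsum_le_ennreal:
  fixes f :: "'a \<Rightarrow> complex"
  shows "ennreal (cmod (infsum f A)) \<le> infsum (\<lambda>x. ennreal (cmod (f x))) A"
proof (cases "f summable_on A")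
  case True
  then have abs: "(\<lambda>x. cmod (f x)) summable_on A"
    using summable_on_iff_abs_summable_on_complex by blast
  have "ennreal (cmod (infsum f A)) \<le> ennreal (infsum (\<lambda>x. cmod (f x)) A)"
    using abs by (intro ennreal_leI norm_infsum_bound)
  also have "\<dots> = infsum (\<lambda>x. ennreal (cmod (f x))) A"
    using abs by (simp add: infsum_ennreal_of_real)
  finally show ?thesis .
next
  case False
  then show ?thesis by (simp add: infsum_not_exists)
qed

lemma Cauchy_Schwarz_sum_ennreal:
  fixes f g :: "'a \<Rightarrow> ennreal"
  assumes "finite F"
  shows "(\<Sum>x\<in>F. f x * g x)\<^sup>2 \<le> (\<Sum>x\<in>F. (f x)\<^sup>2) * (\<Sum>x\<in>F. (g x)\<^sup>2)"
proof -
  have "(\<integral>\<^sup>+x. f x * g x \<partial>count_space F)\<^sup>2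
      \<le> (\<integral>\<^sup>+x. f x ^ 2 \<partial>count_space F) * (\<integral>\<^sup>+x. g x ^ 2 \<partial>count_space F)"
    by (rule Cauchy_Schwarz_nn_integral) auto
  then show ?thesis using assms by (simp add: nn_integral_count_space_finite)
qed

lemma Cauchy_Schwarz_infsum_ennreal:
  fixes f g :: "'a \<Rightarrow> ennreal"
  shows "(infsum (\<lambda>x. f x * g x) A)\<^sup>2 \<le> infsum (\<lambda>x. (f x)\<^sup>2) A * infsum (\<lambda>x. (g x)\<^sup>2) A"
proof -
  let ?S = "infsum (\<lambda>x. f x * g x) A"
  let ?R = "infsum (\<lambda>x. (f x)\<^sup>2) A * infsum (\<lambda>x. (g x)\<^sup>2) A"
  have "((\<lambda>F. sum (\<lambda>x. f x * g x) F) \<longlongrightarrow> ?S) (finite_subsets_at_top A)"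
    using has_sum_infsum[of "\<lambda>x. f x * g x" A] by (simp add: has_sum_def)
  then have lim: "((\<lambda>F. sum (\<lambda>x. f x * g x) F * sum (\<lambda>x. f x * g x) F) \<longlongrightarrow> ?S * ?S)
      (finite_subsets_at_top A)"
    by (intro tendsto_mult_ennreal) auto
  have "\<forall>\<^sub>F F in finite_subsets_at_top A. sum (\<lambda>x. f x * g x) F * sum (\<lambda>x. f x * g x) F \<le> ?R"
  proof (rule eventually_finite_subsets_at_top_weakI)
    fix F assume F: "finite F" "F \<subseteq> A"
    have "sum (\<lambda>x. f x * g x) F * sum (\<lambda>x. f x * g x) F \<le> (\<Sum>x\<in>F. (f x)\<^sup>2) * (\<Sum>x\<in>F. (g x)\<^sup>2)"
      using Cauchy_Schwarz_sum_ennreal[OF F(1), of f g] by (simp add: power2_eq_square)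
    also have "\<dots> \<le> ?R"
      using F infsum_mono_neutral_ennreal[of F A "\<lambda>x. (f x)\<^sup>2"]
        infsum_mono_neutral_ennreal[of F A "\<lambda>x. (g x)\<^sup>2"]
      by (intro mult_mono) auto
    finally show "sum (\<lambda>x. f x * g x) F * sum (\<lambda>x. f x * g x) F \<le> ?R" .
  qed
  then have "?S * ?S \<le> ?R"
    using tendsto_le[OF finite_subsets_at_top_neq_bot tendsto_const lim] by blast
  then show ?thesis by (simp add: power2_eq_square)
qed

definition ennreal_sqrt :: "ennreal \<Rightarrow> ennreal" where
  "ennreal_sqrt t = (if t = \<infinity> then \<infinity> else ennreal (sqrt (enn2real t)))"

lemma ennreal_sqrt_square [simp]: "(ennreal_sqrt t)\<^sup>2 = t"
proof (cases t)
  case (real r)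
  then show ?thesis
    using ennreal_power[of "sqrt r" 2] by (simp add: ennreal_sqrt_def)
qed (simp add: ennreal_sqrt_def)

lemma ennreal_le_of_power2_le:
  fixes p q :: ennreal
  assumes "p\<^sup>2 \<le> q\<^sup>2"
  shows "p \<le> q"
proof (cases q)
  case (real y)
  note q = this
  show ?thesis
  proof (cases p)
    case (real x)
    have "ennreal (x\<^sup>2) \<le> ennreal (y\<^sup>2)"
      using assms real q ennreal_power[of x 2] ennreal_power[of y 2] by simp
    then have "x\<^sup>2 \<le> y\<^sup>2"
      using q by (simp add: ennreal_le_iff)
    then have "x \<le> y"
      using q(1) by (rule power2_le_imp_le)
    then show ?thesis using real q by (simp add: ennreal_leI)
  next
    case top
    have "(ennreal y)\<^sup>2 = ennreal (y\<^sup>2)" using q(1) by (rule ennreal_power)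
    then show ?thesis using assms q top by (simp add: top_unique)
  qed
qed simp

lemma Cauchy_Schwarz_infsum_ennreal_sqrt:
  fixes f g :: "'a \<Rightarrow> ennreal"
  shows "infsum (\<lambda>x. f x * g x) A
    \<le> ennreal_sqrt (infsum (\<lambda>x. (f x)\<^sup>2) A) * ennreal_sqrt (infsum (\<lambda>x. (g x)\<^sup>2) A)"
  by (rule ennreal_le_of_power2_le) (simp add: power_mult_distrib Cauchy_Schwarz_infsum_ennreal)

lemma weighted_Cauchy_Schwarz_infsum_ennreal:
  fixes q m W :: "'j \<Rightarrow> real" and f :: "'j \<Rightarrow> ennreal"
  assumes q: "\<And>j. j \<in> J \<Longrightarrow> q j > 0" and m: "\<And>j. j \<in> J \<Longrightarrow> m j \<ge> 0"
    and W: "\<And>j. j \<in> J \<Longrightarrow> w \<le> q j * W j"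
    and mass: "infsum (\<lambda>j. ennreal (m j ^ 2 * q j)) J \<le> B"
  shows "ennreal w * (infsum (\<lambda>j. ennreal (m j) * f j) J)\<^sup>2 \<le> B * infsum (\<lambda>j. ennreal (W j) * (f j)\<^sup>2) J"
proof -
  let ?g = "\<lambda>j. ennreal (1 / sqrt (q j)) * f j"
  have "infsum (\<lambda>j. ennreal (m j) * f j) J = infsum (\<lambda>j. ennreal (m j * sqrt (q j)) * ?g j) J"
  proof (rule infsum_cong)
    fix j assume j: "j \<in> J"
    have "ennreal (m j) = ennreal (m j * sqrt (q j)) * ennreal (1 / sqrt (q j))"
      using q[OF j] m[OF j] by (simp add: ennreal_mult[symmetric])
    then show "ennreal (m j) * f j = ennreal (m j * sqrt (q j)) * ?g j"
      by (simp add: mult.assoc)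
  qed
  then have "(infsum (\<lambda>j. ennreal (m j) * f j) J)\<^sup>2
      \<le> infsum (\<lambda>j. (ennreal (m j * sqrt (q j)))\<^sup>2) J * infsum (\<lambda>j. (?g j)\<^sup>2) J"
    by (simp only: Cauchy_Schwarz_infsum_ennreal)
  also have "infsum (\<lambda>j. (ennreal (m j * sqrt (q j)))\<^sup>2) J = infsum (\<lambda>j. ennreal (m j ^ 2 * q j)) J"
  proof (rule infsum_cong)
    fix j assume j: "j \<in> J"
    have "0 \<le> m j * sqrt (q j)" using q[OF j] m[OF j] by simp
    then show "(ennreal (m j * sqrt (q j)))\<^sup>2 = ennreal (m j ^ 2 * q j)"
      using q[OF j] by (simp add: ennreal_power power_mult_distrib)
  qed
  also have "\<dots> \<le> B" by (rule mass)
  finally have "(infsum (\<lambda>j. ennreal (m j) * f j) J)\<^sup>2 \<le> B * infsum (\<lambda>j. (?g j)\<^sup>2) J"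
    by (simp add: mult_right_mono)
  then have "ennreal w * (infsum (\<lambda>j. ennreal (m j) * f j) J)\<^sup>2 \<le> ennreal w * (B * infsum (\<lambda>j. (?g j)\<^sup>2) J)"
    by (rule mult_left_mono) simp
  also have "\<dots> = B * infsum (\<lambda>j. ennreal w * (?g j)\<^sup>2) J"
    by (simp add: infsum_cmult_right_ennreal mult.left_commute)
  also have "\<dots> \<le> B * infsum (\<lambda>j. ennreal (W j) * (f j)\<^sup>2) J"
  proof (intro mult_left_mono infsum_mono_ennreal)
    fix j assume j: "j \<in> J"
    have "ennreal w * ennreal (1 / q j) \<le> ennreal (W j)"
    proof (cases "w \<ge> 0")
      case True
      have "w / q j \<le> W j" using W[OF j] q[OF j] by (simp add: divide_le_eq mult.commute)
      then show ?thesis using True q[OF j] by (simp add: ennreal_mult[symmetric] ennreal_leI)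
    qed (simp add: ennreal_neg)
    moreover have "(ennreal (1 / sqrt (q j)))\<^sup>2 = ennreal (1 / q j)"
      using q[OF j] by (simp add: ennreal_power power_divide)
    ultimately show "ennreal w * (?g j)\<^sup>2 \<le> ennreal (W j) * (f j)\<^sup>2"
      by (simp add: power_mult_distrib mult.assoc[symmetric] mult_right_mono)
  qed simp
  finally show ?thesis .
qed

text \<open>A Schur-type test: summed over \<open>k\<close>, the pointwise Cauchy-Schwarz bounds factorise into
  two weighted \<open>\<ell>\<^sup>2\<close> sums because \<open>(k, j) \<mapsto> (a k j, b k j)\<close> is injective.\<close>

lemma weighted_bilinear_estimate:
  fixes a :: "'k \<Rightarrow> 'j \<Rightarrow> 'x" and b :: "'k \<Rightarrow> 'j \<Rightarrow> 'y"
    and w :: "'k \<Rightarrow> real" and Wa :: "'x \<Rightarrow> real" and Wb :: "'y \<Rightarrow> real"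
    and Q :: "'x \<Rightarrow> 'y \<Rightarrow> real" and m :: "'k \<Rightarrow> 'j \<Rightarrow> real"
    and U :: "'x \<Rightarrow> ennreal" and V :: "'y \<Rightarrow> ennreal"
  assumes inj: "inj_on (\<lambda>(k, j). (a k j, b k j)) (Sigma K J)"
    and maps: "\<And>k j. k \<in> K \<Longrightarrow> j \<in> J k \<Longrightarrow> a k j \<in> X \<and> b k j \<in> Y"
    and Q_pos: "\<And>k j. k \<in> K \<Longrightarrow> j \<in> J k \<Longrightarrow> Q (a k j) (b k j) > 0"
    and m_nonneg: "\<And>k j. k \<in> K \<Longrightarrow> j \<in> J k \<Longrightarrow> m k j \<ge> 0"
    and Wa_nonneg: "\<And>x. Wa x \<ge> 0" and Wb_nonneg: "\<And>y. Wb y \<ge> 0" and c_nonneg: "c \<ge> 0"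
    and weight: "\<And>k j. k \<in> K \<Longrightarrow> j \<in> J k \<Longrightarrow> w k \<le> c * Q (a k j) (b k j) * Wa (a k j) * Wb (b k j)"
    and mass: "\<And>k. k \<in> K \<Longrightarrow> infsum (\<lambda>j. ennreal (m k j ^ 2 * Q (a k j) (b k j))) (J k) \<le> B"
  shows "infsum (\<lambda>k. ennreal (w k) * (infsum (\<lambda>j. ennreal (m k j) * U (a k j) * V (b k j)) (J k))\<^sup>2) K
    \<le> B * ennreal c * infsum (\<lambda>x. ennreal (Wa x) * (U x)\<^sup>2) X * infsum (\<lambda>y. ennreal (Wb y) * (V y)\<^sup>2) Y"
proof -
  define G where "G = (\<lambda>(x, y). (ennreal (Wa x) * (U x)\<^sup>2) * (ennreal (Wb y) * (V y)\<^sup>2))"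
  have pointwise: "ennreal (w k) * (infsum (\<lambda>j. ennreal (m k j) * U (a k j) * V (b k j)) (J k))\<^sup>2
      \<le> B * ennreal c * infsum (\<lambda>j. G (a k j, b k j)) (J k)" if k: "k \<in> K" for k
  proof -
    have "ennreal (w k) * (infsum (\<lambda>j. ennreal (m k j) * (U (a k j) * V (b k j))) (J k))\<^sup>2
        \<le> B * infsum (\<lambda>j. ennreal (c * Wa (a k j) * Wb (b k j)) * (U (a k j) * V (b k j))\<^sup>2) (J k)"
      using Q_pos[OF k] m_nonneg[OF k] weight[OF k] mass[OF k]
      by (intro weighted_Cauchy_Schwarz_infsum_ennreal[where q = "\<lambda>j. Q (a k j) (b k j)"]) (auto simp: mult_ac)
    also have "\<dots> = B * (ennreal c * infsum (\<lambda>j. G (a k j, b k j)) (J k))"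
      using c_nonneg Wa_nonneg Wb_nonneg
      by (simp add: G_def infsum_cmult_right_ennreal[symmetric] ennreal_mult power_mult_distrib mult_ac)
    finally show ?thesis by (simp add: mult.assoc)
  qed
  have "infsum (\<lambda>k. ennreal (w k) * (infsum (\<lambda>j. ennreal (m k j) * U (a k j) * V (b k j)) (J k))\<^sup>2) K
      \<le> infsum (\<lambda>k. B * ennreal c * infsum (\<lambda>j. G (a k j, b k j)) (J k)) K"
    using pointwise by (rule infsum_mono_ennreal)
  also have "\<dots> = B * ennreal c * infsum (\<lambda>(k, j). G (a k j, b k j)) (Sigma K J)"
    by (simp add: infsum_cmult_right_ennreal infsum_Sigma_ennreal)
  also have "infsum (\<lambda>(k, j). G (a k j, b k j)) (Sigma K J) = infsum G ((\<lambda>(k, j). (a k j, b k j)) ` Sigma K J)"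
    by (subst infsum_reindex[OF inj]) (simp add: o_def case_prod_unfold)
  also have "\<dots> \<le> infsum G (X \<times> Y)"
    using maps by (intro infsum_mono_neutral_ennreal) auto
  also have "\<dots> = infsum (\<lambda>x. ennreal (Wa x) * (U x)\<^sup>2) X * infsum (\<lambda>y. ennreal (Wb y) * (V y)\<^sup>2) Y"
    unfolding G_def by (rule infsum_product_ennreal)
  finally show ?thesis by (simp add: mult_left_mono mult.assoc)
qed

section \<open>Bracket weights\<close>

lemma jbr_pos: "jbr x > 0"
  unfolding jbr_def by (simp add: add_pos_nonneg)

lemma jbr_ge_1: "jbr x \<ge> 1"
  unfolding jbr_def by simp

lemma jbr_powr: "jbr x powr p = (1 + x\<^sup>2) powr (p / 2)"
proof -
  have "jbr x = (1 + x\<^sup>2) powr (1/2)"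
    unfolding jbr_def by (simp add: powr_half_sqrt add_pos_nonneg)
  then show ?thesis by (simp add: powr_powr)
qed

lemma jbr_nonzero [simp]: "jbr x \<noteq> 0"
  using jbr_pos[of x] by simp

lemma jbr_mono: "\<bar>x\<bar> \<le> \<bar>y\<bar> \<Longrightarrow> jbr x \<le> jbr y"
  unfolding jbr_def by (simp add: abs_le_square_iff)

lemma jbr_add_le: "jbr (x + y) \<le> 2 * max (jbr x) (jbr y)"
proof -
  have "(x + y)\<^sup>2 \<le> 2 * x\<^sup>2 + 2 * y\<^sup>2"
    using zero_le_power2[of "x - y"] by (simp add: power2_eq_square algebra_simps)
  then have "1 + (x + y)\<^sup>2 \<le> 4 * max (1 + x\<^sup>2) (1 + y\<^sup>2)"
    by (simp add: max_def)
  then have "sqrt (1 + (x + y)\<^sup>2) \<le> sqrt (4 * max (1 + x\<^sup>2) (1 + y\<^sup>2))"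
    by (rule real_sqrt_le_mono)
  also have "\<dots> = 2 * max (jbr x) (jbr y)"
    unfolding jbr_def by (simp add: real_sqrt_mult max_def)
  finally show ?thesis unfolding jbr_def .
qed

lemma jbr_powr_le_1: "\<beta> \<ge> 0 \<Longrightarrow> jbr x powr (-\<beta>) \<le> 1"
  using powr_mono2'[of "-\<beta>" 1 "jbr x"] jbr_ge_1[of x] by simp

definition bracket_weight :: "(nat \<Rightarrow> real) \<Rightarrow> nat \<Rightarrow> (nat \<Rightarrow> int) \<Rightarrow> real" where
  "bracket_weight \<sigma> N k = (\<Prod>j<N. jbr (of_int (k j)) powr (2 * \<sigma> j))"

definition split_factor :: "real \<Rightarrow> int \<Rightarrow> int \<Rightarrow> real" where
  "split_factor s x y = jbr (of_int x) powr (-2 * s) + jbr (of_int y) powr (-2 * s)"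

definition split_weight :: "(nat \<Rightarrow> real) \<Rightarrow> nat \<Rightarrow> (nat \<Rightarrow> int) \<Rightarrow> (nat \<Rightarrow> int) \<Rightarrow> real" where
  "split_weight \<sigma> N u v = (\<Prod>j<N. split_factor (\<sigma> j) (u j) (v j))"

lemma bracket_weight_nonneg: "bracket_weight \<sigma> N k \<ge> 0"
  unfolding bracket_weight_def by (intro prod_nonneg) simp

lemma split_factor_pos: "split_factor s x y > 0"
  using jbr_pos[of "of_int x"] jbr_pos[of "of_int y"] unfolding split_factor_def
  by (intro add_pos_pos) simp_all

lemma split_weight_pos: "split_weight \<sigma> N u v > 0"
  unfolding split_weight_def by (intro prod_pos ballI split_factor_pos)

lemma ennreal_split_weight: "ennreal (split_weight \<sigma> N u v) = (\<Prod>j<N. ennreal (split_factor (\<sigma> j) (u j) (v j)))"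
  unfolding split_weight_def by (rule prod_ennreal[symmetric]) (simp add: less_imp_le split_factor_pos)

text \<open>A Peetre-type inequality whose extra factor \<open>split_factor s x y\<close> is summable in \<open>y\<close>
  along \<open>x + y = const\<close> when \<open>s > 1/2\<close>.\<close>

lemma jbr_powr_add_le:
  fixes x y :: int
  assumes s: "s \<ge> 0"
  shows "jbr (of_int (x + y)) powr (2 * s)
    \<le> 4 powr s * split_factor s x y * jbr (of_int x) powr (2 * s) * jbr (of_int y) powr (2 * s)"
proof -
  define A where "A = jbr (of_int x)"
  define B where "B = jbr (of_int y)"
  have A: "A > 0" "A powr (-2 * s) * A powr (2 * s) = 1"
    unfolding A_def using jbr_pos[of "of_int x"] by (simp_all add: powr_add[symmetric])
  have B: "B > 0" "B powr (-2 * s) * B powr (2 * s) = 1"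
    unfolding B_def using jbr_pos[of "of_int y"] by (simp_all add: powr_add[symmetric])
  have "jbr (of_int (x + y)) powr (2 * s) \<le> (2 * max A B) powr (2 * s)"
    unfolding A_def B_def using s jbr_add_le[of "of_int x" "of_int y"] jbr_pos[of "of_int x + of_int y"]
    by (intro powr_mono2) auto
  also have "\<dots> = 4 powr s * max A B powr (2 * s)"
    using A B by (simp add: powr_mult powr_powr[symmetric])
  also have "max A B powr (2 * s) \<le> A powr (2 * s) + B powr (2 * s)"
    by (simp add: max_def)
  also have "A powr (2 * s) + B powr (2 * s) = split_factor s x y * A powr (2 * s) * B powr (2 * s)"
    unfolding split_factor_def A_def[symmetric] B_def[symmetric]
    using A(2) B(2) by (simp add: algebra_simps)
  finally show ?thesis unfolding A_def B_def by (simp add: mult.assoc)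
qed

lemma bracket_weight_add_le:
  assumes "\<And>j. j < N \<Longrightarrow> \<sigma> j \<ge> 0"
  shows "bracket_weight \<sigma> N (\<lambda>j. u j + v j)
    \<le> (\<Prod>j<N. 4 powr \<sigma> j) * split_weight \<sigma> N u v * bracket_weight \<sigma> N u * bracket_weight \<sigma> N v"
proof -
  have "bracket_weight \<sigma> N (\<lambda>j. u j + v j) \<le> (\<Prod>j<N. 4 powr \<sigma> j * split_factor (\<sigma> j) (u j) (v j)
      * jbr (of_int (u j)) powr (2 * \<sigma> j) * jbr (of_int (v j)) powr (2 * \<sigma> j))"
    unfolding bracket_weight_def
    using assms by (intro prod_mono conjI jbr_powr_add_le) auto
  also have "\<dots> = (\<Prod>j<N. 4 powr \<sigma> j) * split_weight \<sigma> N u v * bracket_weight \<sigma> N u * bracket_weight \<sigma> N v"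
    unfolding split_weight_def bracket_weight_def by (simp add: prod.distrib)
  finally show ?thesis .
qed

section \<open>Sums over the lattice\<close>

definition int_lattice :: "nat \<Rightarrow> (nat \<Rightarrow> int) set" where
  "int_lattice N = {k. \<forall>j\<ge>N. k j = 0}"

definition int_lattice0 :: "nat \<Rightarrow> (nat \<Rightarrow> int) set" where
  "int_lattice0 N = {r \<in> int_lattice N. r 0 = 0}"

lemma Zdot_subset_int_lattice: "Zdot N \<subseteq> int_lattice N"
  unfolding Zdot_def int_lattice_def by auto

lemma diff_in_Zdot: "k \<in> Zdot N \<Longrightarrow> k' \<in> Zdot N \<Longrightarrow> k' \<noteq> k \<Longrightarrow> k - k' \<in> Zdot N"
  unfolding Zdot_def by (auto simp: fun_eq_iff) (metis)

lemma infsum_int_lattice_prod: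
  fixes h :: "nat \<Rightarrow> int \<Rightarrow> ennreal"
  shows "infsum (\<lambda>k. \<Prod>i<N. h i (k i)) (int_lattice N) = (\<Prod>i<N. infsum (h i) UNIV)"
proof (induction N)
  case 0
  have "int_lattice 0 = {\<lambda>_. 0}" by (auto simp: int_lattice_def)
  then show ?case by simp
next
  case (Suc N)
  have bij: "bij_betw (\<lambda>(r, n). r(N := n)) (int_lattice N \<times> UNIV) (int_lattice (Suc N))"
  proof (rule bij_betwI[where g = "\<lambda>k. (k(N := 0), k N)"])
    show "(\<lambda>(r, n). r(N := n)) \<in> int_lattice N \<times> UNIV \<rightarrow> int_lattice (Suc N)"
      by (auto simp: int_lattice_def)
    show "(\<lambda>k. (k(N := 0), k N)) \<in> int_lattice (Suc N) \<rightarrow> int_lattice N \<times> UNIV"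
      by (auto simp: int_lattice_def)
  qed (auto simp: int_lattice_def fun_eq_iff)
  have "infsum (\<lambda>k. \<Prod>i<Suc N. h i (k i)) (int_lattice (Suc N))
      = infsum (\<lambda>(r, n). \<Prod>i<Suc N. h i ((r(N := n)) i)) (int_lattice N \<times> UNIV)"
    by (subst infsum_reindex_bij_betw[OF bij, symmetric]) (simp add: case_prod_unfold)
  also have "\<dots> = infsum (\<lambda>(r, n). (\<Prod>i<N. h i (r i)) * h N n) (int_lattice N \<times> UNIV)"
    by (intro infsum_cong) (auto intro: prod.cong)
  also have "\<dots> = infsum (\<lambda>k. \<Prod>i<N. h i (k i)) (int_lattice N) * infsum (h N) UNIV"
    by (rule infsum_product_ennreal)
  finally show ?case using Suc by simp
qed

lemma infsum_int_lattice_fibres: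
  fixes G :: "(nat \<Rightarrow> int) \<Rightarrow> ennreal"
  assumes "N \<ge> 1"
  shows "infsum G (int_lattice N) = infsum (\<lambda>r. infsum (\<lambda>n. G (r(0 := n))) UNIV) (int_lattice0 N)"
proof -
  have bij: "bij_betw (\<lambda>(r, n). r(0 := n)) (int_lattice0 N \<times> UNIV) (int_lattice N)"
  proof (rule bij_betwI[where g = "\<lambda>k. (k(0 := 0), k 0)"])
    show "(\<lambda>(r, n). r(0 := n)) \<in> int_lattice0 N \<times> UNIV \<rightarrow> int_lattice N"
      using assms by (auto simp: int_lattice_def int_lattice0_def)
    show "(\<lambda>k. (k(0 := 0), k 0)) \<in> int_lattice N \<rightarrow> int_lattice0 N \<times> UNIV"
      using assms by (auto simp: int_lattice_def int_lattice0_def)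
  qed (auto simp: int_lattice0_def fun_eq_iff)
  show ?thesis
    by (subst infsum_reindex_bij_betw[OF bij, symmetric]) (simp add: infsum_Sigma_ennreal case_prod_unfold)
qed

lemma infsum_int_reflect: "infsum (\<lambda>n::int. f (x - n)) UNIV = infsum f UNIV"
  using infsum_reindex_bij_betw[OF bij_betwI[of "\<lambda>n. x - n" UNIV UNIV "\<lambda>n. x - n"], of f] by simp

lemma infsum_int_shift: "infsum (\<lambda>n::int. f (n - x)) UNIV = infsum f UNIV"
  using infsum_reindex_bij_betw[OF bij_betwI[of "\<lambda>n. n - x" UNIV UNIV "\<lambda>n. n + x"], of f] by simp

section \<open>The product estimate for \<open>\<sigma> > 1/2\<close>\<close>

lemma infsum_int_bracket_powr_finite:
  assumes p: "p > 1/2"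
  shows "infsum (\<lambda>n::int. ennreal ((1 + (of_int n)\<^sup>2) powr (-p))) UNIV < \<infinity>"
proof -
  define g where "g = (\<lambda>n::nat. (1 + (real n)\<^sup>2) powr (-p))"
  have g_nonneg: "\<And>n. g n \<ge> 0" unfolding g_def by simp
  have "summable g"
  proof (rule summable_comparison_test'[of "\<lambda>n::nat. real n powr (-2 * p)" 1])
    show "summable (\<lambda>n::nat. real n powr (-2 * p))"
      using p by (simp add: summable_real_powr_iff)
    fix n :: nat assume "n \<ge> 1"
    then have n: "real n > 0" by simp
    have "norm (g n) = (1 + (real n)\<^sup>2) powr (-p)" unfolding g_def by simp
    also have "\<dots> \<le> ((real n)\<^sup>2) powr (-p)"
      using p n by (intro powr_mono2') auto
    also have "\<dots> = real n powr (-2 * p)"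
      unfolding powr_realpow[OF n, of 2, symmetric] powr_powr by simp
    finally show "norm (g n) \<le> real n powr (-2 * p)" .
  qed
  then have g: "g summable_on UNIV"
    using g_nonneg by (simp add: summable_on_UNIV_nonneg_real_iff)
  define f where "f = (\<lambda>n::int. ennreal ((1 + (of_int n)\<^sup>2) powr (-p)))"
  have UNIV_int: "(UNIV :: int set) = range int \<union> range (\<lambda>n. - int n)"
  proof (rule set_eqI)
    fix x :: int
    show "x \<in> UNIV \<longleftrightarrow> x \<in> range int \<union> range (\<lambda>n. - int n)"
      by (cases "x \<ge> 0") (auto simp: image_iff intro: exI[of _ "nat x"] exI[of _ "nat (-x)"])
  qed
  have pos: "infsum f (range int) = ennreal (infsum g UNIV)"
    using g g_nonneg by (subst infsum_reindex) (auto simp: f_def g_def o_def infsum_ennreal_of_real)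
  have neg: "infsum f (range (\<lambda>n. - int n)) = ennreal (infsum g UNIV)"
    using g g_nonneg
    by (subst infsum_reindex) (auto simp: f_def g_def o_def inj_on_def infsum_ennreal_of_real)
  have "infsum f UNIV \<le> infsum f (range int) + infsum f (range (\<lambda>n. - int n))"
    unfolding UNIV_int by (rule infsum_Un_le_ennreal)
  also have "\<dots> < \<infinity>" unfolding pos neg by simp
  finally show ?thesis unfolding f_def .
qed

definition bracket_zeta :: "real \<Rightarrow> ennreal" where
  "bracket_zeta s = infsum (\<lambda>n::int. ennreal (jbr (of_int n) powr (-2 * s))) UNIV"

lemma prod_bracket_zeta_finite:
  assumes "\<And>j. j \<in> A \<Longrightarrow> \<sigma> j > 1/2"
  shows "(\<Prod>j\<in>A. 2 * bracket_zeta (\<sigma> j)) < \<infinity>"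
proof -
  have "bracket_zeta (\<sigma> j) < \<infinity>" if "j \<in> A" for j
    using infsum_int_bracket_powr_finite[OF assms[OF that]] by (simp add: bracket_zeta_def jbr_powr)
  then have "\<forall>j\<in>A. 2 * bracket_zeta (\<sigma> j) \<noteq> \<infinity>"
    by (auto simp: ennreal_mult_eq_top_iff dest: less_imp_neq)
  then have "(\<Prod>j\<in>A. 2 * bracket_zeta (\<sigma> j)) \<noteq> \<infinity>"
    by (simp add: ennreal_prod_eq_top)
  then show ?thesis
    by (simp add: less_top)
qed

lemma infsum_split_factor:
  "infsum (\<lambda>n. ennreal (split_factor s (x - n) n)) UNIV = 2 * bracket_zeta s"
proof -
  have "infsum (\<lambda>n. ennreal (split_factor s (x - n) n)) UNIV
     = infsum (\<lambda>n. ennreal (jbr (of_int (x - n)) powr (-2 * s)) + ennreal (jbr (of_int n) powr (-2 * s))) UNIV"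
    unfolding split_factor_def by (intro infsum_cong) (simp add: ennreal_plus)
  also have "\<dots> = infsum (\<lambda>n. ennreal (jbr (of_int (x - n)) powr (-2 * s))) UNIV + bracket_zeta s"
    unfolding bracket_zeta_def by (rule infsum_add) auto
  also have "infsum (\<lambda>n. ennreal (jbr (of_int (x - n)) powr (-2 * s))) UNIV = bracket_zeta s"
    unfolding bracket_zeta_def by (rule infsum_int_reflect)
  finally show ?thesis by (simp add: mult_2)
qed

lemma infsum_split_weight_le:
  "infsum (\<lambda>k'. ennreal (split_weight \<sigma> N (k - k') k')) (Zdot N - {k}) \<le> (\<Prod>j<N. 2 * bracket_zeta (\<sigma> j))"
proof -
  have "infsum (\<lambda>k'. ennreal (split_weight \<sigma> N (k - k') k')) (Zdot N - {k})
      \<le> infsum (\<lambda>k'. \<Prod>j<N. ennreal (split_factor (\<sigma> j) (k j - k' j) (k' j))) (int_lattice N)"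
    using Zdot_subset_int_lattice by (intro infsum_mono_neutral_ennreal) (auto simp: ennreal_split_weight)
  also have "\<dots> = (\<Prod>j<N. infsum (\<lambda>n. ennreal (split_factor (\<sigma> j) (k j - n) n)) UNIV)"
    by (rule infsum_int_lattice_prod[where h = "\<lambda>j n. ennreal (split_factor (\<sigma> j) (k j - n) n)"])
  also have "\<dots> = (\<Prod>j<N. 2 * bracket_zeta (\<sigma> j))"
    by (simp add: infsum_split_factor)
  finally show ?thesis .
qed

definition bracket_norm_sq :: "(nat \<Rightarrow> real) \<Rightarrow> nat \<Rightarrow> (nat \<Rightarrow> int) set \<Rightarrow> ((nat \<Rightarrow> int) \<Rightarrow> ennreal) \<Rightarrow> ennreal" where
  "bracket_norm_sq \<sigma> N A U = infsum (\<lambda>x. ennreal (bracket_weight \<sigma> N x) * (U x)\<^sup>2) A"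

text \<open>Since \<open>0 powr 0 = 0\<close>, the weight \<open>Gweight\<close> with \<open>a = 0\<close> vanishes on resonant modes;
  nonresonance makes it the plain bracket weight.\<close>

lemma GsqE_eq_bracket_norm_sq:
  assumes "\<forall>k\<in>Zdot N. adot N \<alpha> k \<noteq> 0"
  shows "GsqE N \<alpha> \<sigma> 0 g = bracket_norm_sq \<sigma> N (Zdot N) g"
  unfolding GsqE_def bracket_norm_sq_def using assms
  by (intro infsum_cong) (simp add: Gweight_def bracket_weight_def)

lemma Gsq_eq_bracket_norm_sq:
  assumes "\<forall>k\<in>Zdot N. adot N \<alpha> k \<noteq> 0"
  shows "Gsq N \<alpha> \<sigma> 0 u = bracket_norm_sq \<sigma> N (Zdot N) (\<lambda>x. ennreal (cmod (u x)))"
  unfolding Gsq_def using GsqE_eq_bracket_norm_sq[OF assms] .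

lemma convolution_weighted_bound:
  fixes U V :: "(nat \<Rightarrow> int) \<Rightarrow> ennreal"
  assumes \<sigma>: "\<And>j. j < N \<Longrightarrow> \<sigma> j \<ge> 0" and K: "K \<subseteq> Zdot N" and m: "\<And>k k'. m k k' \<ge> 0"
    and mass: "\<And>k. k \<in> K \<Longrightarrow> infsum (\<lambda>k'. ennreal (m k k' ^ 2 * split_weight \<sigma> N (k - k') k')) (Zdot N - {k}) \<le> B"
  shows "infsum (\<lambda>k. ennreal (bracket_weight \<sigma> N k)
           * (infsum (\<lambda>k'. ennreal (m k k') * U (k - k') * V k') (Zdot N - {k}))\<^sup>2) K
    \<le> B * ennreal (\<Prod>j<N. 4 powr \<sigma> j) * bracket_norm_sq \<sigma> N (Zdot N) U * bracket_norm_sq \<sigma> N (Zdot N) V"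
  unfolding bracket_norm_sq_def
proof (rule weighted_bilinear_estimate[where J = "\<lambda>k. Zdot N - {k}" and a = "\<lambda>k k'. k - k'"
      and b = "\<lambda>k k'. k'" and w = "bracket_weight \<sigma> N" and Wa = "bracket_weight \<sigma> N"
      and Wb = "bracket_weight \<sigma> N" and Q = "split_weight \<sigma> N" and X = "Zdot N" and Y = "Zdot N"])
  show "inj_on (\<lambda>(k, k'). (k - k', k')) (SIGMA k:K. Zdot N - {k})"
    by (auto simp: inj_on_def fun_eq_iff)
  fix k k' assume k: "k \<in> K" and k': "k' \<in> Zdot N - {k}"
  show "k - k' \<in> Zdot N \<and> k' \<in> Zdot N"
    using K k k' diff_in_Zdot by auto
  have "(\<lambda>j. (k - k') j + k' j) = k" by (simp add: fun_eq_iff)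
  then show "bracket_weight \<sigma> N k \<le> (\<Prod>j<N. 4 powr \<sigma> j) * split_weight \<sigma> N (k - k') k'
      * bracket_weight \<sigma> N (k - k') * bracket_weight \<sigma> N k'"
    using bracket_weight_add_le[of N \<sigma> "k - k'" k'] \<sigma> by simp
qed (use mass m in \<open>auto simp: split_weight_pos bracket_weight_nonneg intro: prod_nonneg\<close>)

lemma ex_real_factor_if_less_top:
  fixes K :: ennreal
  assumes "K < \<infinity>" and "\<And>u v. f u v \<le> K * g u * h v"
  shows "\<exists>C::real. \<forall>u v. f u v \<le> ennreal C * g u * h v"
  using assms by (intro exI[of _ "enn2real K"]) simp

lemma product_estimate:
  assumes nonres: "\<forall>k\<in>Zdot N. adot N \<alpha> k \<noteq> 0" and \<sigma>: "\<forall>j<N. \<sigma> j > 1/2"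
  shows "\<exists>C::real. \<forall>u v. Gsq N \<alpha> \<sigma> 0 (Gprod N u v) \<le> ennreal C * Gsq N \<alpha> \<sigma> 0 u * Gsq N \<alpha> \<sigma> 0 v"
proof (rule ex_real_factor_if_less_top)
  define B where "B = (\<Prod>j<N. 2 * bracket_zeta (\<sigma> j))"
  define c where "c = (\<Prod>j<N. 4 powr (\<sigma> j))"
  have "B < \<infinity>" unfolding B_def using \<sigma> by (intro prod_bracket_zeta_finite) simp
  then show "B * ennreal c < \<infinity>" by (simp add: ennreal_mult_less_top)
  fix u v :: "(nat \<Rightarrow> int) \<Rightarrow> complex"
  let ?U = "\<lambda>x. ennreal (cmod (u x))" and ?V = "\<lambda>x. ennreal (cmod (v x))"
  have "ennreal (cmod (Gprod N u v k)) \<le> infsum (\<lambda>k'. ennreal 1 * ?U (k - k') * ?V k') (Zdot N - {k})" for k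
    using norm_infsum_le_ennreal[of "\<lambda>k'. u (k - k') * v k'" "Zdot N - {k}"]
    by (simp add: Gprod_def norm_mult ennreal_mult)
  then have "Gsq N \<alpha> \<sigma> 0 (Gprod N u v) \<le> infsum (\<lambda>k. ennreal (bracket_weight \<sigma> N k)
      * (infsum (\<lambda>k'. ennreal 1 * ?U (k - k') * ?V k') (Zdot N - {k}))\<^sup>2) (Zdot N)"
    unfolding Gsq_eq_bracket_norm_sq[OF nonres] bracket_norm_sq_def
    by (intro infsum_mono_ennreal mult_left_mono power_mono) auto
  also have "\<dots> \<le> B * ennreal c * bracket_norm_sq \<sigma> N (Zdot N) ?U * bracket_norm_sq \<sigma> N (Zdot N) ?V"
    unfolding B_def c_def using \<sigma>
    by (intro convolution_weighted_bound) (auto simp: infsum_split_weight_le less_imp_le)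
  finally show "Gsq N \<alpha> \<sigma> 0 (Gprod N u v) \<le> B * ennreal c * Gsq N \<alpha> \<sigma> 0 u * Gsq N \<alpha> \<sigma> 0 v"
    unfolding Gsq_eq_bracket_norm_sq[OF nonres] .
qed

section \<open>The resonance sum along one coordinate\<close>

lemma exists_int_abs_affine_ge:
  fixes c d :: real
  assumes d: "d \<noteq> 0"
  shows "\<exists>n0::int. \<forall>n::int. \<bar>c + d * of_int n\<bar> \<ge> \<bar>d\<bar> / 2 * \<bar>of_int (n - n0)\<bar>"
proof -
  define y where "y = - c / d"
  define n0 where "n0 = \<lfloor>y + 1/2\<rfloor>"
  have y: "of_int n0 \<le> y + 1/2" "y + 1/2 < of_int n0 + 1" unfolding n0_def by linarith+
  have "\<bar>c + d * of_int n\<bar> \<ge> \<bar>d\<bar> / 2 * \<bar>of_int (n - n0)\<bar>" for n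
  proof -
    have "\<bar>of_int (n - n0)\<bar> / 2 \<le> \<bar>of_int n - y\<bar>"
    proof (cases "n = n0")
      case False
      then have "\<bar>of_int (n - n0)::real\<bar> \<ge> 1" by linarith
      then show ?thesis using y unfolding of_int_diff by (auto simp: abs_if split: if_splits)
    qed simp
    then have "\<bar>d\<bar> * (\<bar>of_int (n - n0)\<bar> / 2) \<le> \<bar>d\<bar> * \<bar>of_int n - y\<bar>"
      by (rule mult_left_mono) simp
    moreover have "c + d * of_int n = d * (of_int n - y)"
      unfolding y_def using d by (simp add: field_simps)
    ultimately show ?thesis by (simp add: abs_mult)
  qed
  then show ?thesis by blast
qed

lemma jbr_powr_square: "(jbr x powr (-b))\<^sup>2 = jbr x powr (-2 * b)"
  by (simp add: power2_eq_square powr_add[symmetric])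

lemma jbr_scaled_square_powr_le:
  fixes t z \<beta> :: real
  assumes t: "t > 0" and \<beta>: "\<beta> \<ge> 0"
  shows "jbr (t * z\<^sup>2) powr (-2 * \<beta>) \<le> (min 1 (t\<^sup>2) / 2) powr (-\<beta>) * (1 + z\<^sup>2) powr (-(2 * \<beta>))"
proof -
  define \<tau> where "\<tau> = min 1 (t\<^sup>2) / 2"
  have \<tau>: "\<tau> > 0" unfolding \<tau>_def using t by simp
  have pos: "1 + z\<^sup>2 > 0" by (simp add: add_pos_nonneg)
  have "(1 + z\<^sup>2)\<^sup>2 \<le> 2 * (1 + (z\<^sup>2)\<^sup>2)"
    using zero_le_power2[of "z\<^sup>2 - 1"] by (simp add: power2_eq_square algebra_simps)
  then have "\<tau> * (1 + z\<^sup>2)\<^sup>2 \<le> \<tau> * (2 * (1 + (z\<^sup>2)\<^sup>2))"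
    using \<tau> by (intro mult_left_mono) auto
  also have "\<dots> = min 1 (t\<^sup>2) * (1 + (z\<^sup>2)\<^sup>2)"
    unfolding \<tau>_def by simp
  also have "\<dots> \<le> 1 + (t * z\<^sup>2)\<^sup>2"
    using mult_right_mono[of "min 1 (t\<^sup>2)" "t\<^sup>2" "(z\<^sup>2)\<^sup>2"] by (simp add: power_mult_distrib algebra_simps)
  finally have "(1 + (t * z\<^sup>2)\<^sup>2) powr (-\<beta>) \<le> (\<tau> * (1 + z\<^sup>2)\<^sup>2) powr (-\<beta>)"
    using \<tau> pos \<beta> by (intro powr_mono2') auto
  also have "\<dots> = \<tau> powr (-\<beta>) * ((1 + z\<^sup>2) powr 2) powr (-\<beta>)"
    using \<tau> pos by (simp add: powr_mult powr_realpow)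
  also have "\<dots> = \<tau> powr (-\<beta>) * (1 + z\<^sup>2) powr (-(2 * \<beta>))"
    unfolding powr_powr by simp
  finally show ?thesis unfolding \<tau>_def by (simp add: jbr_powr)
qed

lemma infsum_jbr_scaled_square_finite:
  fixes t \<beta> :: real
  assumes t: "t > 0" and \<beta>: "\<beta> > 1/4"
  shows "infsum (\<lambda>n::int. ennreal (jbr (t * (of_int n)\<^sup>2) powr (-2 * \<beta>))) UNIV < \<infinity>"
proof -
  define c where "c = (min 1 (t\<^sup>2) / 2) powr (-\<beta>)"
  have "infsum (\<lambda>n::int. ennreal (jbr (t * (of_int n)\<^sup>2) powr (-2 * \<beta>))) UNIV
     \<le> infsum (\<lambda>n::int. ennreal c * ennreal ((1 + (of_int n)\<^sup>2) powr (-(2 * \<beta>)))) UNIV"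
    using jbr_scaled_square_powr_le[OF t] \<beta> unfolding c_def
    by (intro infsum_mono_ennreal) (simp add: ennreal_mult[symmetric] ennreal_leI)
  also have "\<dots> = ennreal c * infsum (\<lambda>n::int. ennreal ((1 + (of_int n)\<^sup>2) powr (-(2 * \<beta>)))) UNIV"
    by (rule infsum_cmult_right_ennreal)
  also have "\<dots> < \<infinity>"
    using infsum_int_bracket_powr_finite[of "2 * \<beta>"] \<beta> by (simp add: ennreal_mult_less_top)
  finally show ?thesis .
qed

lemma jbr_product_powr_le:
  fixes a y z p q D \<delta> \<beta> :: real
  assumes "0 \<le> \<delta>" "\<delta> \<le> \<bar>a\<bar>" "0 \<le> D" "D * \<bar>p\<bar> \<le> \<bar>y\<bar>" "D * \<bar>q\<bar> \<le> \<bar>z\<bar>" "0 \<le> \<beta>"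
  shows "jbr (\<bar>a\<bar> * \<bar>z\<bar> * \<bar>y\<bar>) powr (-2 * \<beta>)
    \<le> jbr (\<delta> * D\<^sup>2 * p\<^sup>2) powr (-2 * \<beta>) + jbr (\<delta> * D\<^sup>2 * q\<^sup>2) powr (-2 * \<beta>)"
proof -
  have "min (p\<^sup>2) (q\<^sup>2) \<le> \<bar>q\<bar> * \<bar>p\<bar>"
  proof (cases "\<bar>p\<bar> \<le> \<bar>q\<bar>")
    case True
    then have "\<bar>p\<bar> * \<bar>p\<bar> \<le> \<bar>q\<bar> * \<bar>p\<bar>" by (intro mult_right_mono) auto
    then show ?thesis by (simp add: min_le_iff_disj power2_eq_square abs_mult_self_eq)
  next
    case False
    then have "\<bar>q\<bar> * \<bar>q\<bar> \<le> \<bar>q\<bar> * \<bar>p\<bar>" by (intro mult_left_mono) auto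
    then show ?thesis by (simp add: min_le_iff_disj power2_eq_square abs_mult_self_eq)
  qed
  then have "\<delta> * D\<^sup>2 * min (p\<^sup>2) (q\<^sup>2) \<le> \<delta> * (D * \<bar>q\<bar>) * (D * \<bar>p\<bar>)"
    using assms by (simp add: mult_left_mono power2_eq_square mult_ac)
  also have "\<dots> \<le> \<bar>a\<bar> * \<bar>z\<bar> * \<bar>y\<bar>"
    using assms by (intro mult_mono) auto
  finally have "jbr (\<bar>a\<bar> * \<bar>z\<bar> * \<bar>y\<bar>) powr (-2 * \<beta>) \<le> jbr (\<delta> * D\<^sup>2 * min (p\<^sup>2) (q\<^sup>2)) powr (-2 * \<beta>)"
    using assms by (intro powr_mono2' jbr_mono jbr_pos) auto
  then show ?thesis
    by (cases "p\<^sup>2 \<le> q\<^sup>2") (auto simp: min_def intro: add_increasing2 add_increasing)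
qed

text \<open>For \<open>|a| \<ge> \<delta>\<close> both \<open>c + d n\<close> and \<open>a - (c + d n)\<close> grow linearly in \<open>n\<close> away from one
  integer each, so the summand is dominated by two shifts of \<open>\<langle>t n\<^sup>2\<rangle>\<^sup>-\<^sup>2\<^sup>\<beta>\<close>.\<close>

lemma resonance_sum_uniform_bound:
  fixes d \<delta> \<beta> :: real
  assumes d: "d \<noteq> 0" and \<delta>: "\<delta> > 0" and \<beta>: "\<beta> > 1/4"
  shows "\<exists>B::ennreal. B < \<infinity> \<and> (\<forall>a c. \<bar>a\<bar> \<ge> \<delta> \<longrightarrow>
     infsum (\<lambda>n::int. ennreal ((jbr (\<bar>a\<bar> * \<bar>a - (c + d * of_int n)\<bar> * \<bar>c + d * of_int n\<bar>) powr (-\<beta>))\<^sup>2)) UNIV \<le> B)"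
proof (intro exI conjI allI impI)
  define t where "t = \<delta> * (\<bar>d\<bar> / 2)\<^sup>2"
  define \<phi> where "\<phi> = (\<lambda>z::int. jbr (t * (of_int z)\<^sup>2) powr (-2 * \<beta>))"
  have t: "t > 0" unfolding t_def using \<delta> d by simp
  show "2 * infsum (\<lambda>n. ennreal (\<phi> n)) UNIV < \<infinity>"
    unfolding \<phi>_def using infsum_jbr_scaled_square_finite[OF t \<beta>] by (simp add: ennreal_mult_less_top)
  fix a c assume a: "\<bar>a\<bar> \<ge> \<delta>"
  obtain n0 where n0: "\<And>n::int. \<bar>c + d * of_int n\<bar> \<ge> \<bar>d\<bar> / 2 * \<bar>of_int (n - n0)\<bar>"
    using exists_int_abs_affine_ge[OF d, of c] by blast
  have "-d \<noteq> 0" using d by simp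
  then obtain n1 where n1: "\<And>n::int. \<bar>(a - c) + (-d) * of_int n\<bar> \<ge> \<bar>-d\<bar> / 2 * \<bar>of_int (n - n1)\<bar>"
    using exists_int_abs_affine_ge by blast
  have "ennreal ((jbr (\<bar>a\<bar> * \<bar>a - (c + d * of_int n)\<bar> * \<bar>c + d * of_int n\<bar>) powr (-\<beta>))\<^sup>2)
      \<le> ennreal (\<phi> (n - n0)) + ennreal (\<phi> (n - n1))" for n :: int
  proof -
    have "jbr (\<bar>a\<bar> * \<bar>a - (c + d * of_int n)\<bar> * \<bar>c + d * of_int n\<bar>) powr (-2 * \<beta>) \<le> \<phi> (n - n0) + \<phi> (n - n1)"
      unfolding \<phi>_def t_def using \<delta> a \<beta> n0[of n] n1[of n]
      by (intro order_trans[OF jbr_product_powr_le[where D = "\<bar>d\<bar> / 2"]]) (auto simp: algebra_simps)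
    then show ?thesis
      by (simp add: jbr_powr_square ennreal_plus[symmetric] \<phi>_def ennreal_leI del: ennreal_plus)
  qed
  then have "infsum (\<lambda>n::int. ennreal ((jbr (\<bar>a\<bar> * \<bar>a - (c + d * of_int n)\<bar> * \<bar>c + d * of_int n\<bar>) powr (-\<beta>))\<^sup>2)) UNIV
      \<le> infsum (\<lambda>n. ennreal (\<phi> (n - n0)) + ennreal (\<phi> (n - n1))) UNIV"
    by (intro infsum_mono_ennreal)
  also have "\<dots> = infsum (\<lambda>n. ennreal (\<phi> (n - n0))) UNIV + infsum (\<lambda>n. ennreal (\<phi> (n - n1))) UNIV"
    by (rule infsum_add) auto
  also have "\<dots> = 2 * infsum (\<lambda>n. ennreal (\<phi> n)) UNIV"
    by (simp add: infsum_int_shift[where f = "\<lambda>n. ennreal (\<phi> n)"] mult_2)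
  finally show "infsum (\<lambda>n::int. ennreal ((jbr (\<bar>a\<bar> * \<bar>a - (c + d * of_int n)\<bar> * \<bar>c + d * of_int n\<bar>) powr (-\<beta>))\<^sup>2)) UNIV
      \<le> 2 * infsum (\<lambda>n. ennreal (\<phi> n)) UNIV" .
qed

section \<open>The smoothing estimate for \<open>\<sigma>\<^sub>1 = 0\<close>\<close>

lemma adot_diff: "adot N \<alpha> (k - k') = adot N \<alpha> k - adot N \<alpha> k'"
  unfolding adot_def by (simp add: sum_subtractf algebra_simps)

lemma adot_fun_upd0:
  assumes "N \<ge> 1"
  shows "adot N \<alpha> (k(0 := n)) = adot N \<alpha> k + \<alpha> 0 * of_int (n - k 0)"
proof -
  have "adot N \<alpha> (k(0 := n)) - adot N \<alpha> k
      = (\<Sum>j<N. if j = 0 then \<alpha> 0 * of_int (n - k 0) else 0)"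
    unfolding adot_def sum_subtractf[symmetric] by (intro sum.cong) (auto simp: algebra_simps)
  also have "\<dots> = \<alpha> 0 * of_int (n - k 0)"
    using assms by simp
  finally show ?thesis by simp
qed

lemma nonresonant_alpha0:
  assumes N: "N \<ge> 1" and nonres: "\<forall>k\<in>Zdot N. adot N \<alpha> k \<noteq> 0"
  shows "\<alpha> 0 \<noteq> 0"
proof -
  let ?e = "(\<lambda>_. 0)(0 := 1) :: nat \<Rightarrow> int"
  have "?e \<in> Zdot N" using N unfolding Zdot_def by (auto simp: fun_eq_iff)
  moreover have "adot N \<alpha> ?e = \<alpha> 0"
    using adot_fun_upd0[OF N, of \<alpha> "\<lambda>_. 0" 1] by (simp add: adot_def)
  ultimately show ?thesis using nonres by metis
qed

text \<open>Changing \<open>k\<^sub>1\<close> by \<open>m\<close> moves \<open>\<alpha>\<cdot>k\<close> by \<open>m \<alpha>\<^sub>1\<close>.\<close>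

lemma eq_if_adot_small:
  assumes N: "N \<ge> 1" and d: "\<alpha> 0 \<noteq> 0"
    and k1: "\<bar>adot N \<alpha> k1\<bar> < \<bar>\<alpha> 0\<bar> / 2" and k2: "\<bar>adot N \<alpha> k2\<bar> < \<bar>\<alpha> 0\<bar> / 2"
    and eq: "k1(0 := 0) = k2(0 := 0)"
  shows "k1 = k2"
proof -
  have "adot N \<alpha> k1 - adot N \<alpha> k2 = \<alpha> 0 * of_int (k1 0 - k2 0)"
    using adot_fun_upd0[OF N, of \<alpha> k1 0] adot_fun_upd0[OF N, of \<alpha> k2 0] eq by (simp add: algebra_simps)
  then have "\<bar>\<alpha> 0\<bar> * \<bar>of_int (k1 0 - k2 0)\<bar> < \<bar>\<alpha> 0\<bar> * 1"
    using k1 k2 by (simp add: abs_mult[symmetric])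
  then have "\<bar>of_int (k1 0 - k2 0) :: real\<bar> < 1" using d by simp
  then have "k1 0 = k2 0" by linarith
  then show ?thesis using eq by (metis fun_upd_triv fun_upd_upd)
qed

lemma bracket_weight_fun_upd0:
  assumes "\<sigma> 0 = 0" "N \<ge> 1"
  shows "bracket_weight \<sigma> N (k(0 := n)) = bracket_weight \<sigma> N k"
proof -
  have "{..<N} = insert 0 {1..<N}" using assms(2) by auto
  moreover have "(\<Prod>j\<in>{1..<N}. jbr (of_int ((k(0 := n)) j)) powr (2 * \<sigma> j))
      = (\<Prod>j\<in>{1..<N}. jbr (of_int (k j)) powr (2 * \<sigma> j))"
    by (intro prod.cong) auto
  ultimately show ?thesis unfolding bracket_weight_def using assms(1) by simp
qed

lemma split_weight_sigma0_eq:
  assumes "\<sigma> 0 = 0" "N \<ge> 1"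
  shows "split_weight \<sigma> N u v = 2 * (\<Prod>j\<in>{1..<N}. split_factor (\<sigma> j) (u j) (v j))"
proof -
  have "{..<N} = insert 0 {1..<N}" using assms(2) by auto
  then show ?thesis
    unfolding split_weight_def using assms(1) jbr_pos[of "of_int (u 0)"] jbr_pos[of "of_int (v 0)"]
    by (simp add: split_factor_def)
qed

lemma split_weight_fun_upd0:
  assumes "\<sigma> 0 = 0" "N \<ge> 1"
  shows "split_weight \<sigma> N (k - r(0 := n)) (r(0 := n)) = split_weight \<sigma> N (k - r) r"
proof -
  have "(\<Prod>j\<in>{1..<N}. split_factor (\<sigma> j) ((k - r(0 := n)) j) ((r(0 := n)) j))
      = (\<Prod>j\<in>{1..<N}. split_factor (\<sigma> j) ((k - r) j) (r j))"
    by (intro prod.cong) auto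
  then show ?thesis using split_weight_sigma0_eq[of \<sigma> N, OF assms] by simp
qed

lemma infsum_split_weight_int_lattice0_le:
  assumes \<sigma>0: "\<sigma> 0 = 0" and N: "N \<ge> 1"
  shows "infsum (\<lambda>r. ennreal (split_weight \<sigma> N (k - r) r)) (int_lattice0 N)
    \<le> 2 * (\<Prod>j\<in>{1..<N}. 2 * bracket_zeta (\<sigma> j))"
proof -
  define h where "h = (\<lambda>j (n::int). if j = 0 then (if n = 0 then 2 else 0)
    else ennreal (split_factor (\<sigma> j) (k j - n) n))"
  have N_split: "{..<N} = insert 0 {1..<N}" using N by auto
  have "infsum (\<lambda>r. ennreal (split_weight \<sigma> N (k - r) r)) (int_lattice0 N)
      \<le> infsum (\<lambda>r. \<Prod>j<N. h j (r j)) (int_lattice N)"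
  proof (rule infsum_mono_neutral_ennreal)
    show "int_lattice0 N \<subseteq> int_lattice N" unfolding int_lattice0_def by auto
    fix r assume r: "r \<in> int_lattice0 N"
    have "ennreal (split_weight \<sigma> N (k - r) r) = 2 * (\<Prod>j\<in>{1..<N}. ennreal (split_factor (\<sigma> j) (k j - r j) (r j)))"
      using split_weight_sigma0_eq[of \<sigma> N, OF \<sigma>0 N, of "k - r" r] split_factor_pos
      by (simp add: ennreal_mult prod_nonneg less_imp_le prod_ennreal)
    also have "\<dots> = (\<Prod>j<N. h j (r j))"
      unfolding N_split using r by (simp add: h_def int_lattice0_def)
    finally show "ennreal (split_weight \<sigma> N (k - r) r) \<le> (\<Prod>j<N. h j (r j))" by simp
  qed
  also have "\<dots> = (\<Prod>j<N. infsum (h j) UNIV)"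
    by (rule infsum_int_lattice_prod)
  also have "\<dots> = infsum (h 0) UNIV * (\<Prod>j\<in>{1..<N}. infsum (h j) UNIV)"
    unfolding N_split by simp
  also have "infsum (h 0) UNIV = 2"
    using infsum_cong_neutral[of UNIV "{0}" "h 0" "h 0"] by (simp add: h_def)
  also have "(\<Prod>j\<in>{1..<N}. infsum (h j) UNIV) = (\<Prod>j\<in>{1..<N}. 2 * bracket_zeta (\<sigma> j))"
    by (intro prod.cong) (auto simp: h_def infsum_split_factor)
  finally show ?thesis .
qed

definition resonance_factor :: "nat \<Rightarrow> (nat \<Rightarrow> real) \<Rightarrow> real \<Rightarrow> (nat \<Rightarrow> int) \<Rightarrow> (nat \<Rightarrow> int) \<Rightarrow> real" where
  "resonance_factor N \<alpha> \<beta> k k' = jbr (\<bar>adot N \<alpha> k\<bar> * \<bar>adot N \<alpha> (k - k')\<bar> * \<bar>adot N \<alpha> k'\<bar>) powr (- \<beta>)"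

definition resonant_sum :: "nat \<Rightarrow> (nat \<Rightarrow> real) \<Rightarrow> real \<Rightarrow> ((nat \<Rightarrow> int) \<Rightarrow> complex)
    \<Rightarrow> ((nat \<Rightarrow> int) \<Rightarrow> complex) \<Rightarrow> (nat \<Rightarrow> int) \<Rightarrow> ennreal" where
  "resonant_sum N \<alpha> \<beta> u v k = infsum (\<lambda>k'. ennreal (resonance_factor N \<alpha> \<beta> k k' * cmod (u (k - k')) * cmod (v k')))
    (Zdot N - {k})"

lemma infsum_resonance_mass_le:
  assumes N: "N \<ge> 1" and \<sigma>0: "\<sigma> 0 = 0"
    and B: "\<forall>a c. \<bar>a\<bar> \<ge> \<delta> \<longrightarrow> infsum (\<lambda>n::int.
      ennreal ((jbr (\<bar>a\<bar> * \<bar>a - (c + \<alpha> 0 * of_int n)\<bar> * \<bar>c + \<alpha> 0 * of_int n\<bar>) powr (-\<beta>))\<^sup>2)) UNIV \<le> B"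
    and k: "\<bar>adot N \<alpha> k\<bar> \<ge> \<delta>"
  shows "infsum (\<lambda>k'. ennreal ((resonance_factor N \<alpha> \<beta> k k')\<^sup>2 * split_weight \<sigma> N (k - k') k')) (Zdot N - {k})
    \<le> 2 * (\<Prod>j\<in>{1..<N}. 2 * bracket_zeta (\<sigma> j)) * B"
proof -
  define G where "G k' = ennreal ((resonance_factor N \<alpha> \<beta> k k')\<^sup>2 * split_weight \<sigma> N (k - k') k')" for k'
  have "infsum G (Zdot N - {k}) \<le> infsum G (int_lattice N)"
    using Zdot_subset_int_lattice by (intro infsum_mono_neutral_ennreal) auto
  also have "\<dots> = infsum (\<lambda>r. infsum (\<lambda>n. G (r(0 := n))) UNIV) (int_lattice0 N)"
    using N by (rule infsum_int_lattice_fibres)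
  also have "\<dots> \<le> infsum (\<lambda>r. ennreal (split_weight \<sigma> N (k - r) r) * B) (int_lattice0 N)"
  proof (rule infsum_mono_ennreal)
    fix r assume "r \<in> int_lattice0 N"
    then have r0: "r 0 = 0" by (simp add: int_lattice0_def)
    have "infsum (\<lambda>n. G (r(0 := n))) UNIV = ennreal (split_weight \<sigma> N (k - r) r) * infsum (\<lambda>n.
      ennreal ((jbr (\<bar>adot N \<alpha> k\<bar> * \<bar>adot N \<alpha> k - (adot N \<alpha> r + \<alpha> 0 * of_int n)\<bar>
        * \<bar>adot N \<alpha> r + \<alpha> 0 * of_int n\<bar>) powr (-\<beta>))\<^sup>2)) UNIV"
      unfolding infsum_cmult_right_ennreal[symmetric] G_def resonance_factor_def
        split_weight_fun_upd0[of \<sigma> N, OF \<sigma>0 N] adot_diff adot_fun_upd0[OF N] r0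
      by (intro infsum_cong) (simp add: ennreal_mult[symmetric] less_imp_le[OF split_weight_pos] mult.commute)
    also have "\<dots> \<le> ennreal (split_weight \<sigma> N (k - r) r) * B"
      using B k by (intro mult_left_mono) auto
    finally show "infsum (\<lambda>n. G (r(0 := n))) UNIV \<le> ennreal (split_weight \<sigma> N (k - r) r) * B" .
  qed
  also have "\<dots> = infsum (\<lambda>r. ennreal (split_weight \<sigma> N (k - r) r)) (int_lattice0 N) * B"
    by (rule infsum_cmult_left_ennreal)
  also have "\<dots> \<le> 2 * (\<Prod>j\<in>{1..<N}. 2 * bracket_zeta (\<sigma> j)) * B"
    using infsum_split_weight_int_lattice0_le[of \<sigma> N, OF \<sigma>0 N] by (rule mult_right_mono) simp
  finally show ?thesis unfolding G_def .
qed

lemma smoothing_large_part: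
  assumes N: "N \<ge> 1" and \<sigma>0: "\<sigma> 0 = 0" and \<sigma>: "\<And>j. j < N \<Longrightarrow> \<sigma> j \<ge> 0"
    and B: "\<forall>a c. \<bar>a\<bar> \<ge> \<delta> \<longrightarrow> infsum (\<lambda>n::int.
      ennreal ((jbr (\<bar>a\<bar> * \<bar>a - (c + \<alpha> 0 * of_int n)\<bar> * \<bar>c + \<alpha> 0 * of_int n\<bar>) powr (-\<beta>))\<^sup>2)) UNIV \<le> B"
  shows "infsum (\<lambda>k. ennreal (bracket_weight \<sigma> N k) * (resonant_sum N \<alpha> \<beta> u v k)\<^sup>2)
      {k \<in> Zdot N. \<delta> \<le> \<bar>adot N \<alpha> k\<bar>}
    \<le> 2 * (\<Prod>j\<in>{1..<N}. 2 * bracket_zeta (\<sigma> j)) * B * ennreal (\<Prod>j<N. 4 powr \<sigma> j)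
      * bracket_norm_sq \<sigma> N (Zdot N) (\<lambda>x. ennreal (cmod (u x)))
      * bracket_norm_sq \<sigma> N (Zdot N) (\<lambda>x. ennreal (cmod (v x)))"
proof -
  have "resonant_sum N \<alpha> \<beta> u v k = infsum (\<lambda>k'. ennreal (resonance_factor N \<alpha> \<beta> k k')
      * ennreal (cmod (u (k - k'))) * ennreal (cmod (v k'))) (Zdot N - {k})" for k
    unfolding resonant_sum_def by (intro infsum_cong) (simp add: ennreal_mult resonance_factor_def)
  moreover have "infsum (\<lambda>k. ennreal (bracket_weight \<sigma> N k) * (infsum (\<lambda>k'. ennreal (resonance_factor N \<alpha> \<beta> k k')
      * ennreal (cmod (u (k - k'))) * ennreal (cmod (v k'))) (Zdot N - {k}))\<^sup>2) {k \<in> Zdot N. \<delta> \<le> \<bar>adot N \<alpha> k\<bar>}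
    \<le> 2 * (\<Prod>j\<in>{1..<N}. 2 * bracket_zeta (\<sigma> j)) * B * ennreal (\<Prod>j<N. 4 powr \<sigma> j)
      * bracket_norm_sq \<sigma> N (Zdot N) (\<lambda>x. ennreal (cmod (u x)))
      * bracket_norm_sq \<sigma> N (Zdot N) (\<lambda>x. ennreal (cmod (v x)))"
    using \<sigma> infsum_resonance_mass_le[where \<sigma> = \<sigma> and \<alpha> = \<alpha>, OF N \<sigma>0 B]
    by (intro convolution_weighted_bound) (auto simp: resonance_factor_def)
  ultimately show ?thesis by simp
qed

definition abs_coeff :: "nat \<Rightarrow> ((nat \<Rightarrow> int) \<Rightarrow> complex) \<Rightarrow> (nat \<Rightarrow> int) \<Rightarrow> ennreal" where
  "abs_coeff N u x = (if x \<in> Zdot N then ennreal (cmod (u x)) else 0)"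

definition fibre_norm :: "nat \<Rightarrow> ((nat \<Rightarrow> int) \<Rightarrow> complex) \<Rightarrow> (nat \<Rightarrow> int) \<Rightarrow> ennreal" where
  "fibre_norm N u r = ennreal_sqrt (infsum (\<lambda>n. (abs_coeff N u (r(0 := n)))\<^sup>2) UNIV)"

lemma resonant_sum_le_fibre_convolution:
  assumes N: "N \<ge> 1" and \<beta>: "\<beta> \<ge> 0" and k: "k \<in> Zdot N"
  shows "resonant_sum N \<alpha> \<beta> u v k
    \<le> infsum (\<lambda>r. fibre_norm N u (k(0 := 0) - r) * fibre_norm N v r) (int_lattice0 N)"
proof -
  have "resonant_sum N \<alpha> \<beta> u v k \<le> infsum (\<lambda>k'. abs_coeff N u (k - k') * abs_coeff N v k') (int_lattice N)"
    unfolding resonant_sum_def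
  proof (rule infsum_mono_neutral_ennreal)
    show "Zdot N - {k} \<subseteq> int_lattice N" using Zdot_subset_int_lattice by auto
    fix k' assume k': "k' \<in> Zdot N - {k}"
    have "ennreal (resonance_factor N \<alpha> \<beta> k k' * cmod (u (k - k')) * cmod (v k'))
        \<le> ennreal (cmod (u (k - k')) * cmod (v k'))"
      using jbr_powr_le_1[OF \<beta>] unfolding resonance_factor_def mult.assoc
      by (intro ennreal_leI mult_left_le_one_le) auto
    also have "\<dots> = abs_coeff N u (k - k') * abs_coeff N v k'"
      using k k' diff_in_Zdot by (simp add: abs_coeff_def ennreal_mult)
    finally show "ennreal (resonance_factor N \<alpha> \<beta> k k' * cmod (u (k - k')) * cmod (v k'))
        \<le> abs_coeff N u (k - k') * abs_coeff N v k'" .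
  qed
  also have "\<dots> = infsum (\<lambda>r. infsum (\<lambda>n. abs_coeff N u (k - r(0 := n)) * abs_coeff N v (r(0 := n))) UNIV)
      (int_lattice0 N)"
    using N by (rule infsum_int_lattice_fibres)
  also have "\<dots> \<le> infsum (\<lambda>r. fibre_norm N u (k(0 := 0) - r) * fibre_norm N v r) (int_lattice0 N)"
  proof (rule infsum_mono_ennreal)
    fix r assume "r \<in> int_lattice0 N"
    then have "k - r(0 := n) = (k(0 := 0) - r)(0 := k 0 - n)" for n
      by (auto simp: int_lattice0_def fun_eq_iff)
    then have "infsum (\<lambda>n. (abs_coeff N u (k - r(0 := n)))\<^sup>2) UNIV
        = infsum (\<lambda>n. (abs_coeff N u ((k(0 := 0) - r)(0 := n)))\<^sup>2) UNIV"
      using infsum_int_reflect[of "\<lambda>n. (abs_coeff N u ((k(0 := 0) - r)(0 := n)))\<^sup>2" "k 0"] by simp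
    then show "infsum (\<lambda>n. abs_coeff N u (k - r(0 := n)) * abs_coeff N v (r(0 := n))) UNIV
        \<le> fibre_norm N u (k(0 := 0) - r) * fibre_norm N v r"
      using Cauchy_Schwarz_infsum_ennreal_sqrt[of "\<lambda>n. abs_coeff N u (k - r(0 := n))"
          "\<lambda>n. abs_coeff N v (r(0 := n))" UNIV]
      by (simp add: fibre_norm_def)
  qed
  finally show ?thesis .
qed

lemma bracket_norm_sq_fibre_norm:
  assumes \<sigma>0: "\<sigma> 0 = 0" and N: "N \<ge> 1"
  shows "bracket_norm_sq \<sigma> N (int_lattice0 N) (fibre_norm N u)
    = bracket_norm_sq \<sigma> N (Zdot N) (\<lambda>x. ennreal (cmod (u x)))"
proof -
  have "bracket_norm_sq \<sigma> N (int_lattice0 N) (fibre_norm N u)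
      = infsum (\<lambda>r. infsum (\<lambda>n. ennreal (bracket_weight \<sigma> N (r(0 := n))) * (abs_coeff N u (r(0 := n)))\<^sup>2) UNIV)
          (int_lattice0 N)"
    unfolding bracket_norm_sq_def fibre_norm_def bracket_weight_fun_upd0[of \<sigma> N, OF \<sigma>0 N]
    by (simp add: infsum_cmult_right_ennreal)
  also have "\<dots> = infsum (\<lambda>k. ennreal (bracket_weight \<sigma> N k) * (abs_coeff N u k)\<^sup>2) (int_lattice N)"
    using N by (rule infsum_int_lattice_fibres[symmetric])
  also have "\<dots> = bracket_norm_sq \<sigma> N (Zdot N) (\<lambda>x. ennreal (cmod (u x)))"
    unfolding bracket_norm_sq_def using Zdot_subset_int_lattice
    by (intro infsum_cong_neutral) (auto simp: abs_coeff_def)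
  finally show ?thesis .
qed

lemma smoothing_small_part:
  assumes N: "N \<ge> 1" and \<sigma>0: "\<sigma> 0 = 0" and \<sigma>: "\<And>j. j < N \<Longrightarrow> \<sigma> j \<ge> 0"
    and \<beta>: "\<beta> \<ge> 0" and \<alpha>0: "\<alpha> 0 \<noteq> 0"
  shows "infsum (\<lambda>k. ennreal (bracket_weight \<sigma> N k) * (resonant_sum N \<alpha> \<beta> u v k)\<^sup>2)
      {k \<in> Zdot N. \<bar>adot N \<alpha> k\<bar> < \<bar>\<alpha> 0\<bar> / 2}
    \<le> 2 * (\<Prod>j\<in>{1..<N}. 2 * bracket_zeta (\<sigma> j)) * ennreal (\<Prod>j<N. 4 powr \<sigma> j)
      * bracket_norm_sq \<sigma> N (Zdot N) (\<lambda>x. ennreal (cmod (u x)))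
      * bracket_norm_sq \<sigma> N (Zdot N) (\<lambda>x. ennreal (cmod (v x)))"
proof -
  define K where "K = {k \<in> Zdot N. \<bar>adot N \<alpha> k\<bar> < \<bar>\<alpha> 0\<bar> / 2}"
  have "infsum (\<lambda>k. ennreal (bracket_weight \<sigma> N k) * (resonant_sum N \<alpha> \<beta> u v k)\<^sup>2) K
      \<le> infsum (\<lambda>k. ennreal (bracket_weight \<sigma> N k) * (infsum (\<lambda>r. ennreal 1
          * fibre_norm N u (k(0 := 0) - r) * fibre_norm N v r) (int_lattice0 N))\<^sup>2) K"
    using resonant_sum_le_fibre_convolution[OF N \<beta>] unfolding K_def
    by (intro infsum_mono_ennreal mult_left_mono power_mono) auto
  also have "\<dots> \<le> 2 * (\<Prod>j\<in>{1..<N}. 2 * bracket_zeta (\<sigma> j)) * ennreal (\<Prod>j<N. 4 powr \<sigma> j)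
      * bracket_norm_sq \<sigma> N (int_lattice0 N) (fibre_norm N u) * bracket_norm_sq \<sigma> N (int_lattice0 N) (fibre_norm N v)"
    unfolding bracket_norm_sq_def
  proof (rule weighted_bilinear_estimate[where J = "\<lambda>_. int_lattice0 N" and a = "\<lambda>k r. k(0 := 0) - r"
        and b = "\<lambda>k r. r" and w = "bracket_weight \<sigma> N" and Wa = "bracket_weight \<sigma> N"
        and Wb = "bracket_weight \<sigma> N" and Q = "split_weight \<sigma> N"])
    show "inj_on (\<lambda>(k, r). (k(0 := 0) - r, r)) (SIGMA k:K. int_lattice0 N)"
    proof (rule inj_onI, clarsimp)
      fix k1 k2 r assume "k1 \<in> K" "k2 \<in> K" "k1(0 := 0) - r = k2(0 := 0) - r"
      moreover from this(3) have "k1(0 := 0) = k2(0 := 0)" by (simp add: fun_eq_iff)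
      ultimately show "k1 = k2" using eq_if_adot_small[where \<alpha> = \<alpha>, OF N \<alpha>0] by (auto simp: K_def)
    qed
    fix k r assume k: "k \<in> K" and r: "r \<in> int_lattice0 N"
    show "k(0 := 0) - r \<in> int_lattice0 N \<and> r \<in> int_lattice0 N"
      using k r by (auto simp: K_def int_lattice0_def int_lattice_def Zdot_def)
    have "(\<lambda>j. (k(0 := 0) - r) j + r j) = k(0 := 0)" by (simp add: fun_eq_iff)
    then show "bracket_weight \<sigma> N k \<le> (\<Prod>j<N. 4 powr \<sigma> j) * split_weight \<sigma> N (k(0 := 0) - r) r
        * bracket_weight \<sigma> N (k(0 := 0) - r) * bracket_weight \<sigma> N r"
      using bracket_weight_add_le[of N \<sigma> "k(0 := 0) - r" r] \<sigma> bracket_weight_fun_upd0[of \<sigma> N, OF \<sigma>0 N, of k 0]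
      by simp
  next
    fix k
    show "infsum (\<lambda>r. ennreal (1\<^sup>2 * split_weight \<sigma> N (k(0 := 0) - r) r)) (int_lattice0 N)
        \<le> 2 * (\<Prod>j\<in>{1..<N}. 2 * bracket_zeta (\<sigma> j))"
      using infsum_split_weight_int_lattice0_le[of \<sigma> N, OF \<sigma>0 N] by simp
  qed (auto simp: split_weight_pos bracket_weight_nonneg intro: prod_nonneg)
  finally show ?thesis
    unfolding K_def bracket_norm_sq_fibre_norm[of \<sigma> N, OF \<sigma>0 N] .
qed

lemma smoothing_estimate:
  assumes N: "N \<ge> 1" and nonres: "\<forall>k\<in>Zdot N. adot N \<alpha> k \<noteq> 0"
    and \<sigma>0: "\<sigma> 0 = 0" and \<sigma>: "\<forall>j. 1 \<le> j \<and> j < N \<longrightarrow> \<sigma> j > 1/2" and \<beta>: "\<beta> > 1/4"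
  shows "\<exists>C::real. \<forall>u v. GsqE N \<alpha> \<sigma> 0 (resonant_sum N \<alpha> \<beta> u v) \<le> ennreal C * Gsq N \<alpha> \<sigma> 0 u * Gsq N \<alpha> \<sigma> 0 v"
proof -
  have \<alpha>0: "\<alpha> 0 \<noteq> 0" using nonresonant_alpha0[OF N nonres] .
  define \<delta> where "\<delta> = \<bar>\<alpha> 0\<bar> / 2"
  have \<delta>: "\<delta> > 0" unfolding \<delta>_def using \<alpha>0 by simp
  obtain B where B_finite: "B < \<infinity>" and B: "\<forall>a c. \<bar>a\<bar> \<ge> \<delta> \<longrightarrow> infsum (\<lambda>n::int.
      ennreal ((jbr (\<bar>a\<bar> * \<bar>a - (c + \<alpha> 0 * of_int n)\<bar> * \<bar>c + \<alpha> 0 * of_int n\<bar>) powr (-\<beta>))\<^sup>2)) UNIV \<le> B"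
    using resonance_sum_uniform_bound[where d = "\<alpha> 0", OF \<alpha>0 \<delta> \<beta>] by blast
  define Z where "Z = 2 * (\<Prod>j\<in>{1..<N}. 2 * bracket_zeta (\<sigma> j))"
  define c where "c = (\<Prod>j<N. 4 powr (\<sigma> j))"
  have \<sigma>_nonneg: "\<sigma> j \<ge> 0" if "j < N" for j
  proof (cases "j = 0")
    case False
    then have "\<sigma> j > 1/2" using \<sigma> that by simp
    then show ?thesis by simp
  qed (simp add: \<sigma>0)
  show ?thesis
  proof (rule ex_real_factor_if_less_top)
    have "(\<Prod>j\<in>{1..<N}. 2 * bracket_zeta (\<sigma> j)) < \<infinity>"
      using \<sigma> by (intro prod_bracket_zeta_finite) auto
    then show "Z * B * ennreal c + Z * ennreal c < \<infinity>"
      unfolding Z_def using B_finite by (simp add: ennreal_mult_less_top)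
    fix u v :: "(nat \<Rightarrow> int) \<Rightarrow> complex"
    let ?F = "\<lambda>k. ennreal (bracket_weight \<sigma> N k) * (resonant_sum N \<alpha> \<beta> u v k)\<^sup>2"
    let ?U = "bracket_norm_sq \<sigma> N (Zdot N) (\<lambda>x. ennreal (cmod (u x)))"
    let ?V = "bracket_norm_sq \<sigma> N (Zdot N) (\<lambda>x. ennreal (cmod (v x)))"
    have "Zdot N = {k \<in> Zdot N. \<delta> \<le> \<bar>adot N \<alpha> k\<bar>} \<union> {k \<in> Zdot N. \<bar>adot N \<alpha> k\<bar> < \<delta>}" by auto
    then have "GsqE N \<alpha> \<sigma> 0 (resonant_sum N \<alpha> \<beta> u v)
        = infsum ?F ({k \<in> Zdot N. \<delta> \<le> \<bar>adot N \<alpha> k\<bar>} \<union> {k \<in> Zdot N. \<bar>adot N \<alpha> k\<bar> < \<delta>})"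
      unfolding GsqE_eq_bracket_norm_sq[OF nonres] bracket_norm_sq_def by (rule arg_cong)
    also have "\<dots> = infsum ?F {k \<in> Zdot N. \<delta> \<le> \<bar>adot N \<alpha> k\<bar>} + infsum ?F {k \<in> Zdot N. \<bar>adot N \<alpha> k\<bar> < \<delta>}"
      by (rule infsum_Un_disjoint) auto
    also have "\<dots> \<le> Z * B * ennreal c * ?U * ?V + Z * ennreal c * ?U * ?V"
      unfolding Z_def c_def \<delta>_def
      using smoothing_large_part[where \<sigma> = \<sigma> and \<alpha> = \<alpha>, OF N \<sigma>0 _ B[unfolded \<delta>_def]]
        smoothing_small_part[where \<sigma> = \<sigma> and \<alpha> = \<alpha>, OF N \<sigma>0 _ _ \<alpha>0] \<sigma>_nonneg \<beta>
      by (intro add_mono) simp_all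
    finally show "GsqE N \<alpha> \<sigma> 0 (resonant_sum N \<alpha> \<beta> u v)
        \<le> (Z * B * ennreal c + Z * ennreal c) * Gsq N \<alpha> \<sigma> 0 u * Gsq N \<alpha> \<sigma> 0 v"
      unfolding Gsq_eq_bracket_norm_sq[OF nonres] by (simp add: distrib_right)
  qed
qed

theorem lemma2p2:
  fixes N :: nat and \<alpha> :: "nat \<Rightarrow> real"
  assumes N: "N \<ge> 1"
    and nonres: "\<forall>k\<in>Zdot N. adot N \<alpha> k \<noteq> 0"
  shows
   "(\<forall>\<sigma>. (\<forall>j<N. \<sigma> j > 1/2) \<longrightarrow>
       (\<exists>C::real. \<forall>u v. Gsq N \<alpha> \<sigma> 0 u < \<infinity> \<and> Gsq N \<alpha> \<sigma> 0 v < \<infinity> \<longrightarrow>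
          Gsq N \<alpha> \<sigma> 0 (Gprod N u v) \<le> ennreal C * Gsq N \<alpha> \<sigma> 0 u * Gsq N \<alpha> \<sigma> 0 v))
    \<and>
    (\<forall>\<sigma> (\<beta>::real). \<sigma> 0 = 0 \<and> (\<forall>j. 1 \<le> j \<and> j < N \<longrightarrow> \<sigma> j > 1/2) \<and> \<beta> > 1/4 \<longrightarrow>
       (\<exists>C::real. \<forall>u v. Gsq N \<alpha> \<sigma> 0 u < \<infinity> \<and> Gsq N \<alpha> \<sigma> 0 v < \<infinity> \<longrightarrow>
          GsqE N \<alpha> \<sigma> 0
            (\<lambda>k. \<Sum>\<^sub>\<infinity> k'\<in>Zdot N - {k}.
                 ennreal (jbr (\<bar>adot N \<alpha> k\<bar> * \<bar>adot N \<alpha> (k - k')\<bar> * \<bar>adot N \<alpha> k'\<bar>) powr (- \<beta>)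
                          * cmod (u (k - k')) * cmod (v k')))
          \<le> ennreal C * Gsq N \<alpha> \<sigma> 0 u * Gsq N \<alpha> \<sigma> 0 v))"
proof (intro conjI allI impI)
  fix \<sigma> :: "nat \<Rightarrow> real"
  assume "\<forall>j<N. \<sigma> j > 1/2"
  then show "\<exists>C::real. \<forall>u v. Gsq N \<alpha> \<sigma> 0 u < \<infinity> \<and> Gsq N \<alpha> \<sigma> 0 v < \<infinity> \<longrightarrow>
      Gsq N \<alpha> \<sigma> 0 (Gprod N u v) \<le> ennreal C * Gsq N \<alpha> \<sigma> 0 u * Gsq N \<alpha> \<sigma> 0 v"
    using product_estimate[OF nonres] by blast
next
  fix \<sigma> :: "nat \<Rightarrow> real" and \<beta> :: real
  assume "\<sigma> 0 = 0 \<and> (\<forall>j. 1 \<le> j \<and> j < N \<longrightarrow> \<sigma> j > 1/2) \<and> \<beta> > 1/4"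
  then obtain C where "\<forall>u v. GsqE N \<alpha> \<sigma> 0 (resonant_sum N \<alpha> \<beta> u v) \<le> ennreal C * Gsq N \<alpha> \<sigma> 0 u * Gsq N \<alpha> \<sigma> 0 v"
    using smoothing_estimate[OF N nonres] by blast
  then show "\<exists>C::real. \<forall>u v. Gsq N \<alpha> \<sigma> 0 u < \<infinity> \<and> Gsq N \<alpha> \<sigma> 0 v < \<infinity> \<longrightarrow>
      GsqE N \<alpha> \<sigma> 0 (\<lambda>k. \<Sum>\<^sub>\<infinity> k'\<in>Zdot N - {k}.
        ennreal (jbr (\<bar>adot N \<alpha> k\<bar> * \<bar>adot N \<alpha> (k - k')\<bar> * \<bar>adot N \<alpha> k'\<bar>) powr (- \<beta>)
          * cmod (u (k - k')) * cmod (v k')))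
      \<le> ennreal C * Gsq N \<alpha> \<sigma> 0 u * Gsq N \<alpha> \<sigma> 0 v"
    unfolding resonant_sum_def resonance_factor_def by blast
qed

end
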